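(* Let $E$, $V$, $T$, $\eta$, $t>1$ and a $(T,E)$-decomposition $(\{W_1,\dots,W_h\},\rho)$ be as in the context, and assume that for every $i$ with $|W_i|>1$, $\sum_{e\in E:\,i\in\rho(e)}\eta(e)\le\beta$, where $\beta=4\eta(E)/t$. Let $F$ be the set of edges $f_{ij}$, over unordered pairs $\{i,j\}$, $i\neq j$, with $\sigma(i,j)$ defined, where $f_{ij}$ has the endpoints of $\sigma(i,j)$ and weight $\omega(i,j)=\sum_{e\in E:\rho(e)=\{i,j\}}w(e)$; set $\rho(f_{ij})=\{i,j\}$. Then for every $i$ with $|W_i|>1$, \[ \sum_{f\in F:\ i\in\rho(f)}\mathrm{st}_T(f)\le\beta. \]
   Context: Weighted edges $w[u,v]$ ($u\ne v$, $w>0$) on a vertex set $V$; $w(e)$ is the weight of $e$; $T$ is a spanning tree on $V$ with positive weights. Resistance of an edge is $1/w$, of a path the sum over its edges; for $e=w[u,v]$, $T(e)$ is the path in $T$ from $u$ to $v$, $\mathrm{st}_T(e)=w\cdot\mathrm{res}(T(e))$, $\eta(e)=\max(\mathrm{st}_T(e),1)$, $\eta(E)=\sum_{e\in E}\eta(e)$. A $(T,E)$-decomposition: sets $W_1,\dots,W_h$ covering $V$, each inducing a subtree of $T$ (possibly a single vertex), pairwise intersecting in at most one vertex, with $\rho$ assigning to each edge $(u,v)\in E$ either $\{i\}$ with $u,v\in W_i$ or $\{i,j\}$ ($i\ne j$) with one endpoint in $W_i$ and the other in $W_j$. For $i\ne j$, $\sigma(i,j)$ is the edge $e\in E$ with $\rho(e)=\{i,j\}$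 maximizing $w(e)/\eta(e)$ (ties broken by a fixed order), undefined if none exists. *)

theory Defs
  imports Complex_Main
begin

definition tpath :: "'v set set \<Rightarrow> 'v \<Rightarrow> 'v \<Rightarrow> 'v list \<Rightarrow> bool" where
  "tpath T u v p \<longleftrightarrow> p \<noteq> [] \<and> hd p = u \<and> last p = v \<and> distinct p \<and>
     (\<forall>i. Suc i < length p \<longrightarrow> {p ! i, p ! Suc i} \<in> T)"

definition spanning_tree :: "'v set \<Rightarrow> 'v set set \<Rightarrow> bool" where
  "spanning_tree V T \<longleftrightarrow> finite V \<and> V \<noteq> {} \<and>
     (\<forall>f\<in>T. \<exists>a b. f = {a, b} \<and> a \<noteq> b \<and> a \<in> V \<and> b \<in> V) \<and>
     (\<forall>u\<in>V. \<forall>v\<in>V. \<exists>!p. tpath T u v p)"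

definition tree_path :: "'v set set \<Rightarrow> 'v \<Rightarrow> 'v \<Rightarrow> 'v list" where
  "tree_path T u v = (THE p. tpath T u v p)"

definition tres :: "'v set set \<Rightarrow> ('v set \<Rightarrow> real) \<Rightarrow> 'v \<Rightarrow> 'v \<Rightarrow> real" where
  "tres T wT u v = (let p = tree_path T u v in
     (\<Sum>i<length p - 1. 1 / wT {p ! i, p ! Suc i}))"

definition stretch :: "'v set set \<Rightarrow> ('v set \<Rightarrow> real) \<Rightarrow> 'v \<Rightarrow> 'v \<Rightarrow> real \<Rightarrow> real" where
  "stretch T wT a b x = x * tres T wT a b"

definition eta :: "'v set set \<Rightarrow> ('v set \<Rightarrow> real) \<Rightarrow> 'v \<Rightarrow> 'v \<Rightarrow> real \<Rightarrow> real" where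
  "eta T wT a b x = max (stretch T wT a b x) 1"

(* (T,E)-decomposition with pieces W 1, ..., W h and assignment rho.
   Edges are elements of E :: 'e set with endpoints eu e, ev e and weight w e. *)
definition TE_decomposition ::
  "'v set \<Rightarrow> 'v set set \<Rightarrow> 'e set \<Rightarrow> ('e \<Rightarrow> 'v) \<Rightarrow> ('e \<Rightarrow> 'v) \<Rightarrow>
   nat \<Rightarrow> (nat \<Rightarrow> 'v set) \<Rightarrow> ('e \<Rightarrow> nat set) \<Rightarrow> bool" where
  "TE_decomposition V T E eu ev h W \<rho> \<longleftrightarrow>
     (\<Union>i\<in>{1..h}. W i) = V \<and>
     (\<forall>i\<in>{1..h}. W i \<noteq> {} \<and> W i \<subseteq> V \<and>
        (\<forall>a\<in>W i. \<forall>b\<in>W i. \<exists>p. tpath T a b p \<and> set p \<subseteq> W i)) \<and>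
     (\<forall>i\<in>{1..h}. \<forall>j\<in>{1..h}. i \<noteq> j \<longrightarrow> card (W i \<inter> W j) \<le> 1) \<and>
     (\<forall>e\<in>E.
        (\<exists>i\<in>{1..h}. \<rho> e = {i} \<and> eu e \<in> W i \<and> ev e \<in> W i) \<or>
        (\<exists>i\<in>{1..h}. \<exists>j\<in>{1..h}. i \<noteq> j \<and> \<rho> e = {i, j} \<and>
            ((eu e \<in> W i \<and> ev e \<in> W j) \<or> (eu e \<in> W j \<and> ev e \<in> W i))))"

definition sigma ::
  "'v set set \<Rightarrow> ('v set \<Rightarrow> real) \<Rightarrow> 'e set \<Rightarrow> ('e \<Rightarrow> 'v) \<Rightarrow> ('e \<Rightarrow> 'v) \<Rightarrow> ('e \<Rightarrow> real) \<Rightarrow>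
   ('e \<Rightarrow> nat set) \<Rightarrow> ('e \<Rightarrow> nat) \<Rightarrow> nat \<Rightarrow> nat \<Rightarrow> 'e option" where
  "sigma T wT E eu ev w \<rho> rk i j =
     (let C = {e\<in>E. \<rho> e = {i, j}};
          r = (\<lambda>e. w e / eta T wT (eu e) (ev e) (w e))
      in if i = j \<or> C = {} then None
         else Some (THE e. e \<in> C \<and>
                 (\<forall>e'\<in>C. r e' < r e \<or> (r e' = r e \<and> rk e' \<le> rk e))))"

definition omega :: "'e set \<Rightarrow> ('e \<Rightarrow> real) \<Rightarrow> ('e \<Rightarrow> nat set) \<Rightarrow> nat \<Rightarrow> nat \<Rightarrow> real" where
  "omega E w \<rho> i j = (\<Sum>e\<in>{e\<in>E. \<rho> e = {i, j}}. w e)"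

end

theory Submission
  imports Defs "HOL-Library.Product_Lexorder"
begin

text \<open>
  Let \<open>C(i,j)\<close> be the set of edges \<open>e\<close> with \<open>\<rho>(e) = {i,j}\<close> and \<open>s = \<sigma>(i,j)\<close>.
  Since \<open>w(s) res(T(s)) \<le> \<eta>(s)\<close> and \<open>s\<close> maximizes \<open>w/\<eta>\<close> on \<open>C(i,j)\<close>, the stretch
  \<open>\<omega>(i,j) res(T(s))\<close> of \<open>f\<^sub>i\<^sub>j\<close> is at most the sum of \<open>w(e) \<eta>(s)/w(s) \<le> \<eta>(e)\<close>
  over \<open>e \<in> C(i,j)\<close>. For fixed \<open>i\<close> the classes \<open>C(i,j)\<close> are disjoint sets of edges
  whose \<open>\<rho>\<close> contains \<open>i\<close>, so the load hypothesis bounds the total; the tree and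
  the decomposition play no further role.
\<close>

lemma the_lex_argmax:
  fixes r :: "'a \<Rightarrow> 'b::linorder" and rk :: "'a \<Rightarrow> 'c::linorder"
  assumes fin: "finite C" and ne: "C \<noteq> {}" and inj: "inj_on rk C"
  defines "s \<equiv> THE e. e \<in> C \<and> (\<forall>e'\<in>C. r e' < r e \<or> (r e' = r e \<and> rk e' \<le> rk e))"
  shows "s \<in> C" and "\<forall>e\<in>C. r e \<le> r s"
proof -
  define key where "key e = (r e, rk e)" for e
  have tiebreak_iff: "(r e' < r e \<or> (r e' = r e \<and> rk e' \<le> rk e)) \<longleftrightarrow> key e' \<le> key e"
    for e e' by (auto simp: key_def)
  have key_inj: "inj_on key C"
    using inj by (auto simp: inj_on_def key_def)
  obtain m where m: "m \<in> C" "key m = Max (key ` C)"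
    using Max_in[OF finite_imageI[OF fin]] ne by (metis empty_is_image imageE)
  have m_max: "key e \<le> key m" if "e \<in> C" for e
    unfolding m(2) using fin that by (intro Max_ge) auto
  have "s = m"
    unfolding s_def tiebreak_iff
  proof (rule the_equality)
    show "m \<in> C \<and> (\<forall>e\<in>C. key e \<le> key m)"
      using m(1) m_max by blast
    fix x assume x: "x \<in> C \<and> (\<forall>e\<in>C. key e \<le> key x)"
    then have "key x = key m"
      using m(1) m_max by (meson order.antisym)
    then show "x = m"
      using key_inj x m(1) by (meson inj_onD)
  qed
  moreover have "r e \<le> r m" if "e \<in> C" for e
    using m_max[OF that] by (auto simp: key_def dest: less_imp_le)
  ultimately show "s \<in> C" and "\<forall>e\<in>C. r e \<le> r s"
    using m(1) by auto
qed

lemma sigma_SomeD: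
  assumes fin: "finite E" and inj: "inj_on rk E"
    and sig: "sigma T wT E eu ev w \<rho> rk i j = Some s"
  shows "s \<in> E" and "\<rho> s = {i, j}"
    and "\<forall>e\<in>E. \<rho> e = {i, j} \<longrightarrow>
           w e / eta T wT (eu e) (ev e) (w e) \<le> w s / eta T wT (eu s) (ev s) (w s)"
proof -
  let ?C = "{e\<in>E. \<rho> e = {i, j}}"
  define r where "r e = w e / eta T wT (eu e) (ev e) (w e)" for e
  have ne: "?C \<noteq> {}"
    using sig by (auto simp: sigma_def Let_def split: if_splits)
  have "inj_on rk ?C"
    using inj by (rule inj_on_subset) auto
  note argmax = the_lex_argmax[OF _ ne this, of r]
  have "s = (THE e. e \<in> ?C \<and> (\<forall>e'\<in>?C. r e' < r e \<or> (r e' = r e \<and> rk e' \<le> rk e)))"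
    using sig ne by (auto simp: sigma_def Let_def r_def split: if_splits)
  then show "s \<in> E" and "\<rho> s = {i, j}"
    and "\<forall>e\<in>E. \<rho> e = {i, j} \<longrightarrow>
           w e / eta T wT (eu e) (ev e) (w e) \<le> w s / eta T wT (eu s) (ev s) (w s)"
    using argmax fin by (auto simp: r_def)
qed

lemma tres_le_eta_div:
  assumes "x > 0"
  shows "tres T wT a b \<le> eta T wT a b x / x"
proof -
  have "x * tres T wT a b \<le> eta T wT a b x"
    by (simp add: eta_def stretch_def)
  then show ?thesis
    using assms by (simp add: field_simps)
qed

lemma sum_div_le_sum_if_ratio_le:
  fixes w \<eta> :: "'a \<Rightarrow> real"
  assumes q: "q > 0" and ratio: "\<forall>e\<in>C. \<eta> e > 0 \<and> w e / \<eta> e \<le> q"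
  shows "(\<Sum>e\<in>C. w e) / q \<le> (\<Sum>e\<in>C. \<eta> e)"
  unfolding sum_divide_distrib
proof (rule sum_mono)
  fix e assume "e \<in> C"
  then have "w e \<le> q * \<eta> e"
    using ratio by (simp add: divide_le_eq mult.commute)
  then show "w e / q \<le> \<eta> e"
    using q by (simp add: divide_le_eq mult.commute)
qed

lemma stretch_omega_sigma_le:
  assumes fin: "finite E" and inj: "inj_on rk E" and w_pos: "\<forall>e\<in>E. w e > 0"
    and sig: "sigma T wT E eu ev w \<rho> rk i j = Some s"
  shows "stretch T wT (eu s) (ev s) (omega E w \<rho> i j)
           \<le> (\<Sum>e\<in>{e\<in>E. \<rho> e = {i, j}}. eta T wT (eu e) (ev e) (w e))"
proof -
  let ?\<eta> = "\<lambda>e. eta T wT (eu e) (ev e) (w e)"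
  have \<eta>_pos: "?\<eta> e > 0" for e
    by (simp add: eta_def less_max_iff_disj)
  have ws: "w s > 0"
    using w_pos sigma_SomeD(1)[OF fin inj sig] by blast
  have omega_nonneg: "omega E w \<rho> i j \<ge> 0"
    unfolding omega_def using w_pos by (intro sum_nonneg) (auto intro: less_imp_le)
  have "stretch T wT (eu s) (ev s) (omega E w \<rho> i j)
          = omega E w \<rho> i j * tres T wT (eu s) (ev s)"
    by (simp add: stretch_def)
  also have "\<dots> \<le> omega E w \<rho> i j * (?\<eta> s / w s)"
    using tres_le_eta_div[OF ws] omega_nonneg by (rule mult_left_mono)
  also have "\<dots> = (\<Sum>e\<in>{e\<in>E. \<rho> e = {i, j}}. w e) / (w s / ?\<eta> s)"
    by (simp add: omega_def)
  also have "\<dots> \<le> (\<Sum>e\<in>{e\<in>E. \<rho> e = {i, j}}. ?\<eta> e)"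
    using ws \<eta>_pos sigma_SomeD(3)[OF fin inj sig]
    by (intro sum_div_le_sum_if_ratio_le) auto
  finally show ?thesis .
qed

lemma sum_pair_classes_le_sum_incident:
  fixes f :: "'e \<Rightarrow> 'a::ordered_comm_monoid_add" and \<rho> :: "'e \<Rightarrow> 'i set"
  assumes fin: "finite E" "finite J" and nonneg: "\<forall>e\<in>E. f e \<ge> 0"
  shows "(\<Sum>j\<in>J. \<Sum>e\<in>{e\<in>E. \<rho> e = {i, j}}. f e) \<le> (\<Sum>e\<in>{e\<in>E. i \<in> \<rho> e}. f e)"
proof -
  have "(\<Sum>j\<in>J. \<Sum>e\<in>{e\<in>E. \<rho> e = {i, j}}. f e) = (\<Sum>e\<in>(\<Union>j\<in>J. {e\<in>E. \<rho> e = {i, j}}). f e)"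
    using fin by (intro sum.UNION_disjoint[symmetric]) (auto simp: doubleton_eq_iff)
  also have "\<dots> \<le> (\<Sum>e\<in>{e\<in>E. i \<in> \<rho> e}. f e)"
    using fin nonneg by (intro sum_mono2) auto
  finally show ?thesis .
qed

theorem lemma10p2:
  fixes V :: "'v set" and T :: "'v set set" and wT :: "'v set \<Rightarrow> real"
    and E :: "'e set" and eu ev :: "'e \<Rightarrow> 'v" and w :: "'e \<Rightarrow> real"
    and h :: nat and W :: "nat \<Rightarrow> 'v set" and \<rho> :: "'e \<Rightarrow> nat set"
    and rk :: "'e \<Rightarrow> nat" and t \<beta> :: real
  assumes tree: "spanning_tree V T"
    and wT_pos: "\<forall>f\<in>T. wT f > 0"
    and E_fin: "finite E"
    and E_edges: "\<forall>e\<in>E. eu e \<in> V \<and> ev e \<in> V \<and> eu e \<noteq> ev e \<and> w e > 0"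
    and rk_inj: "inj_on rk E"
    and t_gt: "t > 1"
    and beta_def: "\<beta> = 4 * (\<Sum>e\<in>E. eta T wT (eu e) (ev e) (w e)) / t"
    and decomp: "TE_decomposition V T E eu ev h W \<rho>"
    and load: "\<forall>i\<in>{1..h}. card (W i) > 1 \<longrightarrow>
                 (\<Sum>e\<in>{e\<in>E. i \<in> \<rho> e}. eta T wT (eu e) (ev e) (w e)) \<le> \<beta>"
  shows "\<forall>i\<in>{1..h}. card (W i) > 1 \<longrightarrow>
           (\<Sum>j\<in>{j\<in>{1..h}. j \<noteq> i \<and> sigma T wT E eu ev w \<rho> rk i j \<noteq> None}.
              (let s = the (sigma T wT E eu ev w \<rho> rk i j)
               in stretch T wT (eu s) (ev s) (omega E w \<rho> i j))) \<le> \<beta>"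
proof (intro ballI impI)
  fix i assume i: "i \<in> {1..h}" and nontrivial: "card (W i) > 1"
  let ?\<eta> = "\<lambda>e. eta T wT (eu e) (ev e) (w e)"
  let ?J = "{j\<in>{1..h}. j \<noteq> i \<and> sigma T wT E eu ev w \<rho> rk i j \<noteq> None}"
  have w_pos: "\<forall>e\<in>E. w e > 0"
    using E_edges by blast
  have "(\<Sum>j\<in>?J. let s = the (sigma T wT E eu ev w \<rho> rk i j)
                  in stretch T wT (eu s) (ev s) (omega E w \<rho> i j))
          \<le> (\<Sum>j\<in>?J. \<Sum>e\<in>{e\<in>E. \<rho> e = {i, j}}. ?\<eta> e)"
  proof (rule sum_mono)
    fix j assume "j \<in> ?J"
    then obtain s where "sigma T wT E eu ev w \<rho> rk i j = Some s"
      by auto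
    then show "(let s = the (sigma T wT E eu ev w \<rho> rk i j)
                in stretch T wT (eu s) (ev s) (omega E w \<rho> i j))
                 \<le> (\<Sum>e\<in>{e\<in>E. \<rho> e = {i, j}}. ?\<eta> e)"
      using stretch_omega_sigma_le[OF E_fin rk_inj w_pos] by simp
  qed
  also have "\<dots> \<le> (\<Sum>e\<in>{e\<in>E. i \<in> \<rho> e}. ?\<eta> e)"
    using E_fin by (intro sum_pair_classes_le_sum_incident) (auto simp: eta_def)
  also have "\<dots> \<le> \<beta>"
    using load i nontrivial by blast
  finally show "(\<Sum>j\<in>?J. let s = the (sigma T wT E eu ev w \<rho> rk i j)
                  in stretch T wT (eu s) (ev s) (omega E w \<rho> i j)) \<le> \<beta>" .
qed

end
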